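(* Let $a_1,a_2,a_3,a_4,a_5$ be rational numbers with $1\geqslant a_1\geqslant a_2\geqslant a_3\geqslant a_4\geqslant a_5\geqslant 0$, and let $\delta\geqslant 0$ be rational. Let $N$ be the largest number among $a_2,\ a_2+a_3,\ a_2+a_4,\ a_2+a_5,\ a_3+a_4,\ a_3+a_5,\ a_4+a_5,\ a_2+a_3+a_4,\ a_2+a_3+a_5,\ a_2+a_4+a_5,\ a_3+a_4+a_5,\ a_2+a_3+a_4+a_5$ that does not exceed $1$. Define $$\alpha=\begin{cases}\frac{2}{3+2a_1+2\delta+a_2+a_3+a_4} & \text{if } a_2+a_3\leqslant 1+a_4,\\ \frac{2}{3+2a_1+2\delta+a_2+a_4} & \text{if } a_2+a_4\leqslant 1 \text{ and } a_2+a_3>1+a_4,\\ \frac{2}{3+2a_1+2\delta+a_3+a_4} & \text{if } a_3+a_4\leqslant 1,\ a_2+a_4>1 \text{ and } a_2+a_3>1+a_4,\\ \frac{2}{3+2a_1+2\delta+a_2} & \text{if } a_3+a_4>1,\ a_2+a_4>1 \text{ and } a_2+a_3>1+a_4.\end{cases}$$ Then $$\frac{2}{3+2a_1+2\delta+N}\leqslant\frac{2}{3}\cdot\frac{4+2\delta+a_1+a_2+a_3+a_4+a_5}{4+4\delta+2(a_1+a_2+a_3+a_4+a_5)-a_1^2-a_2^2-a_3^2-a_4^2-a_5^2}$$ and $$\alpha\leqslant\frac{8+4\delta+2a_1+2a_2+2a_3+2a_4}{12+12\delta+6a_1+6a_2+6a_3+6a_4-3a_1^2-3a_2^2-3a_3^2-3a_4^2}.$$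 Moreover, both inequalities are strict unless $a_1=\delta=0$.
   Context: Here $\alpha$ is merely the number defined in the statement (not an $\alpha$-invariant). *)

theory Defs
  imports Complex_Main
begin

definition N_val :: "rat \<Rightarrow> rat \<Rightarrow> rat \<Rightarrow> rat \<Rightarrow> rat" where
  "N_val a2 a3 a4 a5 = Max {x \<in> {a2, a2+a3, a2+a4, a2+a5, a3+a4, a3+a5, a4+a5,
      a2+a3+a4, a2+a3+a5, a2+a4+a5, a3+a4+a5, a2+a3+a4+a5}. x \<le> 1}"

definition alpha_val :: "rat \<Rightarrow> rat \<Rightarrow> rat \<Rightarrow> rat \<Rightarrow> rat \<Rightarrow> rat" where
  "alpha_val a1 a2 a3 a4 \<delta> =
    (if a2 + a3 \<le> 1 + a4 then 2 / (3 + 2*a1 + 2*\<delta> + a2 + a3 + a4)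
     else if a2 + a4 \<le> 1 then 2 / (3 + 2*a1 + 2*\<delta> + a2 + a4)
     else if a3 + a4 \<le> 1 then 2 / (3 + 2*a1 + 2*\<delta> + a3 + a4)
     else 2 / (3 + 2*a1 + 2*\<delta> + a2))"

end

theory Submission
  imports Defs
begin

text \<open>Both inequalities have the shape
  \<open>2 / (3 + 2a\<^sub>1 + 2\<delta> + M) \<le> 2/3 \<cdot> (4 + 2\<delta> + T) / (4 + 4\<delta> + 2T - Q)\<close>,
  with \<open>T\<close> a sum of the \<open>a\<^sub>i\<close> and \<open>Q\<close> the sum of their squares. Cross-multiplying, the gap is
  \<open>2\<delta> + (8a\<^sub>1 + 4M - 3T + 3Q)\<close> plus products of nonnegative numbers, so it suffices that
  \<open>8a\<^sub>1 + 4M - 3T + 3Q \<ge> a\<^sub>1\<close>. When \<open>M\<close> is a large enough partial sum this holds because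
  \<open>a\<^sub>i\<^sup>2 \<ge> 0\<close>; otherwise the case hypotheses force \<open>a\<^sub>2 > 1/2\<close>, and \<open>a\<^sup>2 \<ge> a - 1/4\<close> suffices.\<close>

lemma power2_ge_self_minus_quarter: "(a::'a::linordered_field)^2 \<ge> a - 1/4"
proof -
  have "0 \<le> (a - 1/2)^2" by simp
  thus ?thesis by (simp add: power2_eq_square algebra_simps)
qed

lemma power2_le_self: "0 \<le> (a::'a::linordered_idom) \<Longrightarrow> a \<le> 1 \<Longrightarrow> a^2 \<le> a"
  by (simp add: power2_eq_square mult_left_le)

lemma two_div_le_two_thirds_ratio:
  fixes a1 \<delta> M T Q :: "'a::linordered_field"
  assumes "0 \<le> a1" "0 \<le> \<delta>" "0 \<le> M" "0 \<le> T" "Q \<le> T"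
    and excess: "a1 \<le> 8*a1 + 4*M - 3*T + 3*Q"
  shows "2/(3+2*a1+2*\<delta>+M) \<le> 2/3 * ((4+2*\<delta>+T) / (4+4*\<delta>+2*T-Q))"
    and "\<not> (a1 = 0 \<and> \<delta> = 0) \<Longrightarrow> 2/(3+2*a1+2*\<delta>+M) < 2/3 * ((4+2*\<delta>+T) / (4+4*\<delta>+2*T-Q))"
proof -
  define A where "A = 3+2*a1+2*\<delta>+M"
  define D where "D = 4+4*\<delta>+2*T-Q"
  have A_pos: "0 < A" and D_pos: "0 < D" using assms by (simp_all add: A_def D_def)
  have "A*(4+2*\<delta>+T) - 3*D =
      2*\<delta> + (8*a1 + 4*M - 3*T + 3*Q) + 4*(a1*\<delta>) + 4*(\<delta>*\<delta>) + 2*(\<delta>*M) + 2*(\<delta>*T) + 2*(a1*T) + M*T"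
    by (simp add: A_def D_def algebra_simps)
  moreover have "0 \<le> a1*\<delta>" "0 \<le> \<delta>*\<delta>" "0 \<le> \<delta>*M" "0 \<le> \<delta>*T" "0 \<le> a1*T" "0 \<le> M*T"
    using assms by simp_all
  ultimately have gap: "2*\<delta> + a1 \<le> A*(4+2*\<delta>+T) - 3*D" using excess by linarith
  have le_iff: "2/A \<le> 2/3 * ((4+2*\<delta>+T)/D) \<longleftrightarrow> 3*D \<le> A*(4+2*\<delta>+T)"
    and less_iff: "2/A < 2/3 * ((4+2*\<delta>+T)/D) \<longleftrightarrow> 3*D < A*(4+2*\<delta>+T)"
    using A_pos D_pos by (simp_all add: field_simps, linarith+)
  show "2/(3+2*a1+2*\<delta>+M) \<le> 2/3 * ((4+2*\<delta>+T) / (4+4*\<delta>+2*T-Q))"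
    using le_iff gap assms by (simp add: A_def D_def)
  assume "\<not> (a1 = 0 \<and> \<delta> = 0)"
  then have "0 < 2*\<delta> + a1" using assms by auto
  then show "2/(3+2*a1+2*\<delta>+M) < 2/3 * ((4+2*\<delta>+T) / (4+4*\<delta>+2*T-Q))"
    using less_iff gap by (simp add: A_def D_def)
qed

lemma le_N_val:
  assumes "x \<in> {a2, a2+a3, a2+a4, a2+a5, a3+a4, a3+a5, a4+a5,
      a2+a3+a4, a2+a3+a5, a2+a4+a5, a3+a4+a5, a2+a3+a4+a5}" "x \<le> 1"
  shows "x \<le> N_val a2 a3 a4 a5"
  unfolding N_val_def using assms by (intro Max_ge) auto

lemma N_val_excess:
  fixes a1 a2 a3 a4 a5 :: rat
  assumes "1 \<ge> a1" "a1 \<ge> a2" "a2 \<ge> a3" "a3 \<ge> a4" "a4 \<ge> a5" "a5 \<ge> 0"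
  shows "a1 \<le> 8*a1 + 4*N_val a2 a3 a4 a5 - 3*(a1+a2+a3+a4+a5)
                + 3*(a1^2+a2^2+a3^2+a4^2+a5^2)"
proof (cases "a2 + a3 \<le> 1")
  case True
  then have "a2 + a3 \<le> N_val a2 a3 a4 a5" by (intro le_N_val) auto
  moreover have "0 \<le> a1^2" "0 \<le> a2^2" "0 \<le> a3^2" "0 \<le> a4^2" "0 \<le> a5^2" by simp_all
  ultimately show ?thesis using assms unfolding distrib_left by linarith
next
  case False
  have "a2 \<le> N_val a2 a3 a4 a5" using assms by (intro le_N_val) auto
  moreover have "a1 - 1/4 \<le> a1^2" "a2 - 1/4 \<le> a2^2" "a3 - 1/4 \<le> a3^2" "a4 - 1/4 \<le> a4^2"
    by (rule power2_ge_self_minus_quarter)+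
  moreover have "0 \<le> a5^2" by simp
  ultimately show ?thesis using False assms unfolding distrib_left by linarith
qed

lemma alpha_val_excess:
  fixes a1 a2 a3 a4 \<delta> :: rat
  assumes "1 \<ge> a1" "a1 \<ge> a2" "a2 \<ge> a3" "a3 \<ge> a4" "a4 \<ge> 0"
  obtains M where "alpha_val a1 a2 a3 a4 \<delta> = 2/(3+2*a1+2*\<delta>+M)" "0 \<le> M"
    "a1 \<le> 8*a1 + 4*M - 3*(a1+a2+a3+a4) + 3*(a1^2+a2^2+a3^2+a4^2)"
proof -
  have sq_nonneg: "0 \<le> a1^2" "0 \<le> a2^2" "0 \<le> a3^2" "0 \<le> a4^2" by simp_all
  have sq_lower: "a1 - 1/4 \<le> a1^2" "a2 - 1/4 \<le> a2^2" "a3 - 1/4 \<le> a3^2" "a4 - 1/4 \<le> a4^2"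
    by (rule power2_ge_self_minus_quarter)+
  consider "a2 + a3 \<le> 1 + a4" | "\<not> a2 + a3 \<le> 1 + a4" "a2 + a4 \<le> 1"
    | "\<not> a2 + a3 \<le> 1 + a4" "\<not> a2 + a4 \<le> 1" "a3 + a4 \<le> 1"
    | "\<not> a2 + a3 \<le> 1 + a4" "\<not> a2 + a4 \<le> 1" "\<not> a3 + a4 \<le> 1" by blast
  then show ?thesis
  proof cases
    case 1
    have "a1 \<le> 8*a1 + 4*(a2+a3+a4) - 3*(a1+a2+a3+a4) + 3*(a1^2+a2^2+a3^2+a4^2)"
      using 1 assms sq_nonneg unfolding distrib_left by linarith
    with 1 assms show ?thesis by (intro that[of "a2+a3+a4"]) (simp_all add: alpha_val_def add.assoc)
  next
    case 2
    have "a1 \<le> 8*a1 + 4*(a2+a4) - 3*(a1+a2+a3+a4) + 3*(a1^2+a2^2+a3^2+a4^2)"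
      using 2 assms sq_nonneg unfolding distrib_left by linarith
    with 2 assms show ?thesis by (intro that[of "a2+a4"]) (simp_all add: alpha_val_def add.assoc)
  next
    case 3
    have "a1 \<le> 8*a1 + 4*(a3+a4) - 3*(a1+a2+a3+a4) + 3*(a1^2+a2^2+a3^2+a4^2)"
      using 3 assms sq_nonneg unfolding distrib_left by linarith
    with 3 assms show ?thesis by (intro that[of "a3+a4"]) (simp_all add: alpha_val_def add.assoc)
  next
    case 4
    have "a1 \<le> 8*a1 + 4*a2 - 3*(a1+a2+a3+a4) + 3*(a1^2+a2^2+a3^2+a4^2)"
      using 4 assms sq_lower unfolding distrib_left by linarith
    with 4 assms show ?thesis by (intro that[of a2]) (simp_all add: alpha_val_def add.assoc)
  qed
qed

theorem propositionA1:
  fixes a1 a2 a3 a4 a5 \<delta> :: rat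
  assumes "1 \<ge> a1" "a1 \<ge> a2" "a2 \<ge> a3" "a3 \<ge> a4" "a4 \<ge> a5" "a5 \<ge> 0"
    and "\<delta> \<ge> 0"
  defines "L1 \<equiv> 2 / (3 + 2*a1 + 2*\<delta> + N_val a2 a3 a4 a5)"
    and "R1 \<equiv> (2/3) * ((4 + 2*\<delta> + a1 + a2 + a3 + a4 + a5) /
              (4 + 4*\<delta> + 2*(a1 + a2 + a3 + a4 + a5) - a1^2 - a2^2 - a3^2 - a4^2 - a5^2))"
    and "L2 \<equiv> alpha_val a1 a2 a3 a4 \<delta>"
    and "R2 \<equiv> (8 + 4*\<delta> + 2*a1 + 2*a2 + 2*a3 + 2*a4) /
              (12 + 12*\<delta> + 6*a1 + 6*a2 + 6*a3 + 6*a4 - 3*a1^2 - 3*a2^2 - 3*a3^2 - 3*a4^2)"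
  shows "L1 \<le> R1 \<and> L2 \<le> R2 \<and> (\<not> (a1 = 0 \<and> \<delta> = 0) \<longrightarrow> L1 < R1 \<and> L2 < R2)"
proof -
  have sq_le: "a1^2 \<le> a1" "a2^2 \<le> a2" "a3^2 \<le> a3" "a4^2 \<le> a4" "a5^2 \<le> a5"
    using assms(1-6) by (auto intro!: power2_le_self)
  have "a2 \<le> N_val a2 a3 a4 a5" using assms(1-6) by (intro le_N_val) auto
  then have first: "L1 \<le> R1 \<and> (\<not> (a1 = 0 \<and> \<delta> = 0) \<longrightarrow> L1 < R1)"
    using two_div_le_two_thirds_ratio[of a1 \<delta> "N_val a2 a3 a4 a5" "a1+a2+a3+a4+a5"
        "a1^2+a2^2+a3^2+a4^2+a5^2"] N_val_excess[OF assms(1-6)] sq_le assms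
    by (simp add: L1_def R1_def algebra_simps)
  obtain M where M: "L2 = 2/(3+2*a1+2*\<delta>+M)" "0 \<le> M"
    "a1 \<le> 8*a1 + 4*M - 3*(a1+a2+a3+a4) + 3*(a1^2+a2^2+a3^2+a4^2)"
    using alpha_val_excess[of a1 a2 a3 a4 \<delta>] assms(1-6) unfolding L2_def by force
  have "R2 = 2/3 * ((4+2*\<delta>+(a1+a2+a3+a4)) / (4+4*\<delta>+2*(a1+a2+a3+a4)-(a1^2+a2^2+a3^2+a4^2)))"
    unfolding R2_def by (simp add: field_simps)
  then have second: "L2 \<le> R2 \<and> (\<not> (a1 = 0 \<and> \<delta> = 0) \<longrightarrow> L2 < R2)"
    using two_div_le_two_thirds_ratio[of a1 \<delta> M "a1+a2+a3+a4" "a1^2+a2^2+a3^2+a4^2"]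
      M sq_le assms by simp
  from first second show ?thesis by blast
qed

end
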